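(* Let $\gamma\in(0,1)$, $t\ge1$, $H\ge1$ integers, and for each integer $i$ with $t/2\le i<t$ let $\bm Q_i\in\mathbb R^{|\mathcal S||\mathcal A|}$ satisfy $\bm0\le\bm Q_i\le\frac1{1-\gamma}\bm1$, with $\bm V_i(s)=\max_a\bm Q_i(s,a)$ and greedy policy $\pi_i(s)\in\arg\max_a\bm Q_i(s,a)$. Let $\Pi$ be the set of deterministic policies $\pi$ such that for every $s\in\mathcal S$, $\pi(s)\in\{\pi_i(s):t/2\le i<t\}$ (the index $i$ may depend on $s$). Then for any policies $\widehat\pi_1,\dots,\widehat\pi_{H}\in\Pi$, $$\sum_{h=0}^{H-1}\gamma^h\Big(\prod_{k=1}^h\bm P^{\widehat\pi_k}\Big)\max_{t/2\le i<t}\mathsf{Var}_{\bm P}(\bm V_i)\le\frac{4}{\gamma^2(1-\gamma)^2}\Big(1+2\max_{t/2\le i<t}\|\bm Q_i-\bm Q^\star\|_\infty\Big)\bm1.$$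
   Context: Discounted MDP with finite $\mathcal S,\mathcal A$, rewards in $[0,1]$, discount $\gamma$, optimal Q-function $\bm Q^\star$. Vector inequalities and $\max$ over vectors are entrywise; $\bm1$ is the all-ones vector. $\bm P\in\mathbb R^{|\mathcal S||\mathcal A|\times|\mathcal S|}$ with $\bm P((s,a),s')=P(s'\mid s,a)$. For a deterministic policy $\pi$, $\bm\Pi^\pi(s,(s,a))=1$ iff $a=\pi(s)$ and $0$ otherwise, and $\bm P^\pi=\bm P\bm\Pi^\pi$. For $\bm V\in\mathbb R^{|\mathcal S|}$, $\mathsf{Var}_{\bm P}(\bm V)=\bm P(\bm V\circ\bm V)-(\bm P\bm V)\circ(\bm P\bm V)$, $\circ$ the entrywise product. Empty products are the identity. *)

theory Defs
  imports Complex_Main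
begin

(* Transition kernel  P :: ('s \<times> 'a) \<Rightarrow> 's \<Rightarrow> real,  P (s,a) s' = P(s'|s,a).
   Q-vectors: ('s \<times> 'a) \<Rightarrow> real,  V-vectors: 's \<Rightarrow> real,
   matrices: functions row \<Rightarrow> column \<Rightarrow> real. *)

definition stochastic :: "('s::finite \<times> 'a::finite \<Rightarrow> 's \<Rightarrow> real) \<Rightarrow> bool" where
  "stochastic P \<longleftrightarrow> (\<forall>sa s'. 0 \<le> P sa s') \<and> (\<forall>sa. (\<Sum>s'\<in>UNIV. P sa s') = 1)"

definition vmax :: "('s \<times> 'a::finite \<Rightarrow> real) \<Rightarrow> 's \<Rightarrow> real" where
  "vmax Q s = Max (range (\<lambda>a. Q (s, a)))"

definition Papply :: "('s::finite \<times> 'a \<Rightarrow> 's \<Rightarrow> real) \<Rightarrow> ('s \<Rightarrow> real) \<Rightarrow> ('s \<times> 'a \<Rightarrow> real)" where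
  "Papply P V = (\<lambda>sa. \<Sum>s'\<in>UNIV. P sa s' * V s')"

definition VarP :: "('s::finite \<times> 'a \<Rightarrow> 's \<Rightarrow> real) \<Rightarrow> ('s \<Rightarrow> real) \<Rightarrow> ('s \<times> 'a \<Rightarrow> real)" where
  "VarP P V = (\<lambda>sa. Papply P (\<lambda>s. V s * V s) sa - Papply P V sa * Papply P V sa)"

definition bellman_opt :: "('s::finite \<times> 'a::finite \<Rightarrow> real) \<Rightarrow> ('s \<times> 'a \<Rightarrow> 's \<Rightarrow> real) \<Rightarrow> real
      \<Rightarrow> ('s \<times> 'a \<Rightarrow> real) \<Rightarrow> ('s \<times> 'a \<Rightarrow> real)" where
  "bellman_opt r P \<gamma> Q = (\<lambda>sa. r sa + \<gamma> * Papply P (vmax Q) sa)"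

definition Qstar :: "('s::finite \<times> 'a::finite \<Rightarrow> real) \<Rightarrow> ('s \<times> 'a \<Rightarrow> 's \<Rightarrow> real) \<Rightarrow> real
      \<Rightarrow> ('s \<times> 'a \<Rightarrow> real)" where
  "Qstar r P \<gamma> = (THE Q. bellman_opt r P \<gamma> Q = Q)"

(* P^\<pi> = P \<Pi>^\<pi>, a (|S||A|) x (|S||A|) matrix *)
definition Ppi :: "('s \<times> 'a \<Rightarrow> 's \<Rightarrow> real) \<Rightarrow> ('s \<Rightarrow> 'a) \<Rightarrow> ('s \<times> 'a \<Rightarrow> 's \<times> 'a \<Rightarrow> real)" where
  "Ppi P \<pi> = (\<lambda>sa (s', a'). if a' = \<pi> s' then P sa s' else 0)"

definition mat_mult :: "('x \<Rightarrow> 'x::finite \<Rightarrow> real) \<Rightarrow> ('x \<Rightarrow> 'x \<Rightarrow> real) \<Rightarrow> ('x \<Rightarrow> 'x \<Rightarrow> real)" where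
  "mat_mult A B = (\<lambda>x y. \<Sum>z\<in>UNIV. A x z * B z y)"

definition mat_id :: "'x \<Rightarrow> 'x \<Rightarrow> real" where
  "mat_id = (\<lambda>x y. if x = y then 1 else 0)"

definition mat_vec :: "('x \<Rightarrow> 'x::finite \<Rightarrow> real) \<Rightarrow> ('x \<Rightarrow> real) \<Rightarrow> ('x \<Rightarrow> real)" where
  "mat_vec A v = (\<lambda>x. \<Sum>y\<in>UNIV. A x y * v y)"

fun prod_Ppi :: "('s::finite \<times> 'a::finite \<Rightarrow> 's \<Rightarrow> real) \<Rightarrow> (nat \<Rightarrow> 's \<Rightarrow> 'a) \<Rightarrow> nat
      \<Rightarrow> ('s \<times> 'a \<Rightarrow> 's \<times> 'a \<Rightarrow> real)" where
  "prod_Ppi P pol 0 = mat_id"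
| "prod_Ppi P pol (Suc h) = mat_mult (prod_Ppi P pol h) (Ppi P (pol (Suc h)))"

definition supnorm :: "('x::finite \<Rightarrow> real) \<Rightarrow> real" where
  "supnorm v = Max (range (\<lambda>x. \<bar>v x\<bar>))"

end

theory Submission
  imports Defs
begin

(* Let V\<^sup>\<star> = vmax Q\<^sup>\<star> and \<epsilon> = max\<^sub>i \<parallel>Q\<^sub>i - Q\<^sup>\<star>\<parallel>\<^sub>\<infinity>.  Each V\<^sub>i is \<epsilon>-close to V\<^sup>\<star>, so
   Var\<^sub>P(V\<^sub>i) \<le> Var\<^sub>P(V\<^sup>\<star>) + 4\<epsilon>/(1 - \<gamma>), and every policy in \<Pi> is 2\<epsilon>-greedy for Q\<^sup>\<star>.
   The Bellman equation Q\<^sup>\<star> = r + \<gamma> P V\<^sup>\<star> gives \<gamma>\<^sup>2 (P V\<^sup>\<star>)\<^sup>2 = (Q\<^sup>\<star> - r)\<^sup>2 \<ge> (Q\<^sup>\<star>)\<^sup>2 - 2/(1 - \<gamma>),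
   hence for \<pi> \<in> \<Pi>
     \<gamma>\<^sup>2 Var\<^sub>P(V\<^sup>\<star>) \<le> \<gamma>\<^sup>2 P\<^sup>\<pi> (Q\<^sup>\<star>)\<^sup>2 - (Q\<^sup>\<star>)\<^sup>2 + 2 (1 + 2\<gamma>\<^sup>2\<epsilon>)/(1 - \<gamma>).
   Weighted by \<gamma>\<^sup>h P^(\<pi>\<^sub>1) \<dots> P^(\<pi>\<^sub>h) and summed over h < H, the second moments of Q\<^sup>\<star> telescope,
   leaving at most 1/(1 - \<gamma>)\<^sup>2 plus a geometric sum of the constants. *)

section \<open>Row-stochastic kernels\<close>

definition row_stochastic :: "('x \<Rightarrow> 'y::finite \<Rightarrow> real) \<Rightarrow> bool" where
  "row_stochastic M \<longleftrightarrow> (\<forall>x y. 0 \<le> M x y) \<and> (\<forall>x. (\<Sum>y\<in>UNIV. M x y) = 1)"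

definition kernel_mean :: "('x \<Rightarrow> 'y::finite \<Rightarrow> real) \<Rightarrow> ('y \<Rightarrow> real) \<Rightarrow> 'x \<Rightarrow> real" where
  "kernel_mean M v x = (\<Sum>y\<in>UNIV. M x y * v y)"

lemma stochastic_iff_row_stochastic: "stochastic P \<longleftrightarrow> row_stochastic P"
  unfolding stochastic_def row_stochastic_def ..

lemma Papply_eq_kernel_mean: "Papply P = kernel_mean P"
  by (intro ext) (simp add: Papply_def kernel_mean_def)

lemma mat_vec_eq_kernel_mean: "mat_vec M = kernel_mean M"
  by (intro ext) (simp add: mat_vec_def kernel_mean_def)

lemma kernel_mean_add: "kernel_mean M (\<lambda>y. u y + v y) x = kernel_mean M u x + kernel_mean M v x"
  unfolding kernel_mean_def by (simp add: distrib_left sum.distrib)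

lemma kernel_mean_diff: "kernel_mean M (\<lambda>y. u y - v y) x = kernel_mean M u x - kernel_mean M v x"
  unfolding kernel_mean_def by (simp add: right_diff_distrib sum_subtractf)

lemma kernel_mean_cmult: "kernel_mean M (\<lambda>y. c * v y) x = c * kernel_mean M v x"
  unfolding kernel_mean_def by (simp add: sum_distrib_left mult.left_commute)

lemma kernel_mean_const: "row_stochastic M \<Longrightarrow> kernel_mean M (\<lambda>_. c) x = c"
  unfolding kernel_mean_def row_stochastic_def by (simp flip: sum_distrib_right)

lemma kernel_mean_mono:
  assumes "row_stochastic M" and "\<And>y. u y \<le> v y"
  shows "kernel_mean M u x \<le> kernel_mean M v x"
  unfolding kernel_mean_def
  using assms by (intro sum_mono) (simp add: mult_left_mono row_stochastic_def)

lemma kernel_mean_le_add_const: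
  assumes M: "row_stochastic M" and "\<And>y. u y \<le> v y + c"
  shows "kernel_mean M u x \<le> kernel_mean M v x + c"
proof -
  have "kernel_mean M u x \<le> kernel_mean M (\<lambda>y. v y + c) x"
    by (rule kernel_mean_mono[OF M]) fact
  then show ?thesis by (simp add: kernel_mean_add kernel_mean_const[OF M])
qed

lemma kernel_mean_bounds:
  assumes M: "row_stochastic M" and "\<And>y. a \<le> v y \<and> v y \<le> b"
  shows "a \<le> kernel_mean M v x \<and> kernel_mean M v x \<le> b"
  using kernel_mean_mono[OF M, of "\<lambda>_. a" v x] kernel_mean_mono[OF M, of v "\<lambda>_. b" x] assms
  by (simp add: kernel_mean_const[OF M])

lemma abs_kernel_mean_le:
  assumes "row_stochastic M" and "\<And>y. \<bar>v y\<bar> \<le> e"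
  shows "\<bar>kernel_mean M v x\<bar> \<le> e"
proof -
  have "- e \<le> v y \<and> v y \<le> e" for y using assms(2)[of y] by linarith
  then have "- e \<le> kernel_mean M v x \<and> kernel_mean M v x \<le> e"
    by (rule kernel_mean_bounds[OF assms(1)])
  then show ?thesis by (simp add: abs_le_iff)
qed

lemma kernel_mean_mat_mult: "kernel_mean (mat_mult A B) v = kernel_mean A (kernel_mean B v)"
proof (rule ext)
  fix x
  have "kernel_mean (mat_mult A B) v x = (\<Sum>y\<in>UNIV. \<Sum>z\<in>UNIV. A x z * B z y * v y)"
    unfolding kernel_mean_def mat_mult_def by (simp add: sum_distrib_right)
  also have "\<dots> = (\<Sum>z\<in>UNIV. \<Sum>y\<in>UNIV. A x z * B z y * v y)"
    by (rule sum.swap)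
  finally show "kernel_mean (mat_mult A B) v x = kernel_mean A (kernel_mean B v) x"
    unfolding kernel_mean_def by (simp add: sum_distrib_left mult.assoc)
qed

lemma row_stochastic_iff_kernel_mean:
  "row_stochastic M \<longleftrightarrow> (\<forall>x y. 0 \<le> M x y) \<and> (\<forall>x. kernel_mean M (\<lambda>_. 1) x = 1)"
  unfolding row_stochastic_def kernel_mean_def by simp

lemma row_stochastic_mat_id: "row_stochastic (mat_id :: 'x::finite \<Rightarrow> 'x \<Rightarrow> real)"
  unfolding row_stochastic_def mat_id_def by simp

lemma row_stochastic_mat_mult:
  assumes A: "row_stochastic A" and B: "row_stochastic B"
  shows "row_stochastic (mat_mult A B)"
proof -
  have "kernel_mean B (\<lambda>_. 1) = (\<lambda>_. 1)"
    using B by (auto simp: row_stochastic_iff_kernel_mean)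
  then show ?thesis
    using A B unfolding row_stochastic_iff_kernel_mean kernel_mean_mat_mult
    by (auto simp: mat_mult_def intro!: sum_nonneg)
qed

lemma kernel_mean_Ppi:
  fixes P :: "'s::finite \<times> 'a::finite \<Rightarrow> 's \<Rightarrow> real"
  shows "kernel_mean (Ppi P \<pi>) v = kernel_mean P (\<lambda>s. v (s, \<pi> s))"
proof (rule ext)
  fix x
  have "kernel_mean (Ppi P \<pi>) v x
      = (\<Sum>s\<in>UNIV. \<Sum>a\<in>UNIV. if a = \<pi> s then P x s * v (s, a) else 0)"
    unfolding kernel_mean_def Ppi_def sum.cartesian_product UNIV_Times_UNIV
    by (intro sum.cong) auto
  then show "kernel_mean (Ppi P \<pi>) v x = kernel_mean P (\<lambda>s. v (s, \<pi> s)) x"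
    by (simp add: kernel_mean_def)
qed

lemma row_stochastic_Ppi:
  fixes P :: "'s::finite \<times> 'a::finite \<Rightarrow> 's \<Rightarrow> real"
  shows "row_stochastic P \<Longrightarrow> row_stochastic (Ppi P \<pi>)"
  unfolding row_stochastic_iff_kernel_mean kernel_mean_Ppi by (simp add: Ppi_def)

lemma row_stochastic_prod_Ppi: "stochastic P \<Longrightarrow> row_stochastic (prod_Ppi P pol h)"
  by (induction h)
    (simp_all add: row_stochastic_mat_id row_stochastic_mat_mult row_stochastic_Ppi
      stochastic_iff_row_stochastic)

section \<open>Sup norm and the greedy value\<close>

lemma abs_le_supnorm: "\<bar>v x\<bar> \<le> supnorm v"
  unfolding supnorm_def by (rule Max_ge) auto

lemma supnorm_le: "(\<And>x. \<bar>v x\<bar> \<le> e) \<Longrightarrow> supnorm v \<le> e"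
  unfolding supnorm_def by (auto intro: Max.boundedI)

lemma supnorm_nonneg: "0 \<le> supnorm v"
  using abs_le_supnorm[of v] abs_ge_zero order_trans by blast

lemma vmax_ge: "Q (s, a) \<le> vmax Q s"
  unfolding vmax_def by (rule Max_ge) auto

lemma vmax_attained: obtains a where "vmax Q s = Q (s, a)"
proof -
  have "vmax Q s \<in> range (\<lambda>a. Q (s, a))" unfolding vmax_def by (rule Max_in) auto
  then show ?thesis using that by auto
qed

lemma vmax_eq_greedy: "(\<And>a. Q (s, a) \<le> Q (s, b)) \<Longrightarrow> vmax Q s = Q (s, b)"
  by (metis vmax_attained vmax_ge order_antisym)

lemma vmax_bounds: "(\<And>sa. c \<le> Q sa \<and> Q sa \<le> d) \<Longrightarrow> c \<le> vmax Q s \<and> vmax Q s \<le> d"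
  by (metis vmax_attained)

lemma abs_vmax_diff_le: "\<bar>vmax A s - vmax B s\<bar> \<le> supnorm (\<lambda>sa. A sa - B sa)"
proof -
  obtain a b where a: "vmax A s = A (s, a)" and b: "vmax B s = B (s, b)"
    by (metis vmax_attained)
  have "A (s, a) - B (s, a) \<le> supnorm (\<lambda>sa. A sa - B sa)"
    "B (s, b) - A (s, b) \<le> supnorm (\<lambda>sa. A sa - B sa)"
    using abs_le_supnorm[of "\<lambda>sa. A sa - B sa"] by (auto simp: abs_le_iff)
  with vmax_ge[of B s a] vmax_ge[of A s b] show ?thesis unfolding a b by linarith
qed

lemma greedy_near_optimal:
  assumes "supnorm (\<lambda>sa. Q sa - Qs sa) \<le> \<epsilon>" and "\<And>a. Q (s, a) \<le> Q (s, b)"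
  shows "vmax Qs s - Qs (s, b) \<le> 2 * \<epsilon>"
  using abs_vmax_diff_le[of Q s Qs] abs_le_supnorm[of "\<lambda>sa. Q sa - Qs sa" "(s, b)"] assms(1)
    vmax_eq_greedy[of Q s b, OF assms(2)]
  by linarith

section \<open>Contractions in the sup norm and the optimal Q-function\<close>

lemma abs_suminf_minus_sum_le:
  fixes f :: "nat \<Rightarrow> real"
  assumes c: "0 \<le> c" "c < 1" and f: "\<And>k. \<bar>f k\<bar> \<le> C * c ^ k"
  shows "summable f" and "\<bar>suminf f - (\<Sum>k<n. f k)\<bar> \<le> C * c ^ n / (1 - c)"
proof -
  have geom: "summable (\<lambda>k. C * c ^ k)" using c by (intro summable_mult summable_geometric) simp
  show sf: "summable f" by (rule summable_comparison_test'[OF geom, of 0]) (simp add: f)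
  have "\<bar>suminf f - (\<Sum>k<n. f k)\<bar> = \<bar>\<Sum>k. f (k + n)\<bar>"
    using suminf_split_initial_segment[OF sf, of n] by simp
  also have "\<dots> \<le> (\<Sum>k. C * c ^ n * c ^ k)"
  proof -
    have "\<bar>f (k + n)\<bar> \<le> C * c ^ n * c ^ k" for k
      using f[of "k + n"] by (simp add: power_add mult_ac)
    then show ?thesis
      using norm_suminf_le[of "\<lambda>k. f (k + n)" "\<lambda>k. C * c ^ n * c ^ k"] c
      by (simp add: summable_mult summable_geometric)
  qed
  also have "\<dots> = C * c ^ n / (1 - c)"
    using suminf_mult[OF summable_geometric[of c], of "C * c ^ n"] suminf_geometric[of c] c by simp
  finally show "\<bar>suminf f - (\<Sum>k<n. f k)\<bar> \<le> C * c ^ n / (1 - c)" .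
qed

lemma contraction_fixed_point_unique:
  fixes F :: "('x::finite \<Rightarrow> real) \<Rightarrow> 'x \<Rightarrow> real"
  assumes c: "c < 1"
    and contr: "\<And>A B. supnorm (\<lambda>x. F A x - F B x) \<le> c * supnorm (\<lambda>x. A x - B x)"
    and "F Q = Q" "F R = R"
  shows "Q = R"
proof -
  have "supnorm (\<lambda>x. Q x - R x) \<le> c * supnorm (\<lambda>x. Q x - R x)"
    using contr[of Q R] assms(3,4) by simp
  then have "(1 - c) * supnorm (\<lambda>x. Q x - R x) \<le> 0"
    by (simp add: algebra_simps)
  then have "supnorm (\<lambda>x. Q x - R x) \<le> 0"
    using c by (simp add: mult_le_0_iff)
  then have "\<bar>Q x - R x\<bar> \<le> 0" for x
    using abs_le_supnorm[of "\<lambda>x. Q x - R x" x] by linarith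
  then show "Q = R" by (intro ext) simp
qed

lemma contraction_iterate_step_le:
  fixes F :: "('x::finite \<Rightarrow> real) \<Rightarrow> 'x \<Rightarrow> real"
  assumes c: "0 \<le> c"
    and contr: "\<And>A B. supnorm (\<lambda>x. F A x - F B x) \<le> c * supnorm (\<lambda>x. A x - B x)"
  shows "supnorm (\<lambda>x. (F ^^ Suc n) v x - (F ^^ n) v x) \<le> c ^ n * supnorm (\<lambda>x. F v x - v x)"
proof (induction n)
  case (Suc n)
  have "supnorm (\<lambda>x. (F ^^ Suc (Suc n)) v x - (F ^^ Suc n) v x)
      \<le> c * supnorm (\<lambda>x. (F ^^ Suc n) v x - (F ^^ n) v x)"
    unfolding funpow.simps comp_def by (rule contr)
  also have "\<dots> \<le> c * (c ^ n * supnorm (\<lambda>x. F v x - v x))"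
    using Suc c by (rule mult_left_mono)
  finally show ?case by simp
qed simp

lemma contraction_has_fixed_point:
  fixes F :: "('x::finite \<Rightarrow> real) \<Rightarrow> 'x \<Rightarrow> real"
  assumes c: "0 \<le> c" "c < 1"
    and contr: "\<And>A B. supnorm (\<lambda>x. F A x - F B x) \<le> c * supnorm (\<lambda>x. A x - B x)"
  obtains L where "F L = L"
proof -
  define Qn where "Qn n = (F ^^ n) (\<lambda>_. 0)" for n
  define K where "K = supnorm (\<lambda>x. F (\<lambda>_. 0) x)"
  \<comment> \<open>the limit of the Picard iterates, as the sum of their increments\<close>
  define L where "L x = (\<Sum>k. Qn (Suc k) x - Qn k x)" for x
  have K0: "0 \<le> K" unfolding K_def by (rule supnorm_nonneg)
  have tail: "\<bar>L x - Qn n x\<bar> \<le> K * c ^ n / (1 - c)" for x n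
  proof -
    have "\<bar>Qn (Suc k) x - Qn k x\<bar> \<le> K * c ^ k" for k
      using abs_le_supnorm[of "\<lambda>x. Qn (Suc k) x - Qn k x" x]
        contraction_iterate_step_le[OF c(1) contr, of k "\<lambda>_. 0"]
      by (simp add: Qn_def K_def mult.commute)
    moreover have "(\<Sum>k<n. Qn (Suc k) x - Qn k x) = Qn n x"
      using sum_lessThan_telescope[of "\<lambda>k. Qn k x" n] by (simp add: Qn_def)
    ultimately show ?thesis
      using abs_suminf_minus_sum_le(2)[OF c, of "\<lambda>k. Qn (Suc k) x - Qn k x" K n]
      unfolding L_def by simp
  qed
  have "\<bar>F L x - L x\<bar> \<le> 2 * K / (1 - c) * c ^ n" for x n
  proof -
    have "\<bar>F L x - F (Qn n) x\<bar> \<le> c * supnorm (\<lambda>x. L x - Qn n x)"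
      using abs_le_supnorm[of "\<lambda>x. F L x - F (Qn n) x" x] contr[of L "Qn n"] by linarith
    also have "\<dots> \<le> c * (K * c ^ n / (1 - c))"
      using c(1) by (intro mult_left_mono supnorm_le tail)
    also have "\<dots> \<le> K * c ^ n / (1 - c)"
      using c K0 by (intro mult_left_le_one_le) auto
    finally have "\<bar>F L x - Qn (Suc n) x\<bar> \<le> K * c ^ n / (1 - c)"
      by (simp add: Qn_def)
    moreover have "K * c ^ Suc n / (1 - c) \<le> K * c ^ n / (1 - c)"
      using c K0 by (intro divide_right_mono mult_left_mono power_decreasing) auto
    ultimately have "\<bar>F L x - L x\<bar> \<le> K * c ^ n / (1 - c) + K * c ^ n / (1 - c)"
      using tail[of x "Suc n"] by linarith
    then show ?thesis by (simp add: field_simps)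
  qed
  moreover have "(\<lambda>n. 2 * K / (1 - c) * c ^ n) \<longlonglongrightarrow> 0"
    using c by (intro tendsto_mult_right_zero LIMSEQ_power_zero) simp
  ultimately have "\<bar>F L x - L x\<bar> \<le> 0" for x
    by (intro LIMSEQ_le_const[where X = "\<lambda>n. 2 * K / (1 - c) * c ^ n"]) auto
  then have "F L = L" by (intro ext) simp
  then show ?thesis by (rule that)
qed

lemma bellman_opt_contraction:
  assumes P: "stochastic P" and \<gamma>: "0 \<le> \<gamma>"
  shows "supnorm (\<lambda>sa. bellman_opt r P \<gamma> A sa - bellman_opt r P \<gamma> B sa)
    \<le> \<gamma> * supnorm (\<lambda>sa. A sa - B sa)"
proof (rule supnorm_le)
  fix sa
  have "\<bar>kernel_mean P (\<lambda>s. vmax A s - vmax B s) sa\<bar> \<le> supnorm (\<lambda>sa. A sa - B sa)"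
    using P by (intro abs_kernel_mean_le abs_vmax_diff_le) (simp add: stochastic_iff_row_stochastic)
  then show "\<bar>bellman_opt r P \<gamma> A sa - bellman_opt r P \<gamma> B sa\<bar> \<le> \<gamma> * supnorm (\<lambda>sa. A sa - B sa)"
    using \<gamma> by (simp add: bellman_opt_def Papply_eq_kernel_mean kernel_mean_diff abs_mult
        mult_left_mono flip: right_diff_distrib)
qed

lemma Qstar_fixed_point:
  assumes "stochastic P" "0 \<le> \<gamma>" "\<gamma> < 1"
  shows "bellman_opt r P \<gamma> (Qstar r P \<gamma>) = Qstar r P \<gamma>"
proof -
  note contr = bellman_opt_contraction[OF assms(1,2)]
  obtain L where "bellman_opt r P \<gamma> L = L"
    using contraction_has_fixed_point[OF assms(2,3) contr] .
  then have "\<exists>!Q. bellman_opt r P \<gamma> Q = Q"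
    using contraction_fixed_point_unique[OF assms(3) contr] by blast
  then show ?thesis unfolding Qstar_def by (rule theI')
qed

lemma Qstar_eq:
  assumes "stochastic P" "0 \<le> \<gamma>" "\<gamma> < 1"
  shows "Qstar r P \<gamma> sa = r sa + \<gamma> * kernel_mean P (vmax (Qstar r P \<gamma>)) sa"
  using Qstar_fixed_point[OF assms, of r] unfolding bellman_opt_def Papply_eq_kernel_mean
  by metis

lemma Qstar_bounds:
  assumes P: "stochastic P" and r: "\<forall>sa. 0 \<le> r sa \<and> r sa \<le> 1" and \<gamma>: "0 \<le> \<gamma>" "\<gamma> < 1"
  shows "0 \<le> Qstar r P \<gamma> sa \<and> Qstar r P \<gamma> sa \<le> 1 / (1 - \<gamma>)"
proof -
  define Q where "Q = Qstar r P \<gamma>"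
  define lo hi where "lo = Min (range Q)" and "hi = Max (range Q)"
  have "lo \<le> Q x \<and> Q x \<le> hi" for x by (simp add: lo_def hi_def)
  then have "lo \<le> kernel_mean P (vmax Q) x \<and> kernel_mean P (vmax Q) x \<le> hi" for x
    using P by (intro kernel_mean_bounds vmax_bounds) (simp_all add: stochastic_iff_row_stochastic)
  then have "\<gamma> * lo \<le> Q x \<and> Q x \<le> 1 + \<gamma> * hi" for x
    using Qstar_eq[OF P \<gamma>, of r x] r[rule_format, of x] mult_left_mono[OF _ \<gamma>(1)]
    unfolding Q_def by (metis add_increasing add_mono)
  then have "\<gamma> * lo \<le> lo" "hi \<le> 1 + \<gamma> * hi" by (simp_all add: lo_def hi_def)
  then have "0 \<le> (1 - \<gamma>) * lo" "(1 - \<gamma>) * hi \<le> 1" by (simp_all add: algebra_simps)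
  then have "0 \<le> lo" "hi \<le> 1 / (1 - \<gamma>)"
    using \<gamma> by (auto simp only: zero_le_mult_iff pos_le_divide_eq mult.commute)
  with \<open>lo \<le> Q sa \<and> Q sa \<le> hi\<close> show ?thesis unfolding Q_def by linarith
qed

section \<open>Discounted sums\<close>

lemma sum_power_le_inverse_one_minus:
  fixes \<gamma> :: real
  assumes "0 \<le> \<gamma>" "\<gamma> < 1"
  shows "(\<Sum>h<n. \<gamma> ^ h) \<le> 1 / (1 - \<gamma>)"
  using sum_le_suminf[OF summable_geometric, of \<gamma> "{..<n}"] suminf_geometric[of \<gamma>] assms
  by simp

lemma discounted_telescoping_le:
  fixes \<gamma> A c :: real and G a :: "nat \<Rightarrow> real"
  assumes \<gamma>: "0 \<le> \<gamma>" "\<gamma> < 1" and c: "0 \<le> c"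
    and step: "\<And>h. h < H \<Longrightarrow> \<gamma>\<^sup>2 * G h \<le> \<gamma>\<^sup>2 * a (Suc h) - a h + c"
    and a: "\<And>h. 0 \<le> a h \<and> a h \<le> A"
  shows "\<gamma>\<^sup>2 * (\<Sum>h<H. \<gamma> ^ h * G h) \<le> A + c / (1 - \<gamma>)"
proof -
  have "\<gamma>\<^sup>2 * (\<Sum>h<H. \<gamma> ^ h * G h) = (\<Sum>h<H. \<gamma> ^ h * (\<gamma>\<^sup>2 * G h))"
    by (simp add: sum_distrib_left mult.left_commute)
  also have "\<dots> \<le> (\<Sum>h<H. \<gamma> ^ Suc h * a (Suc h) - \<gamma> ^ h * a h + c * \<gamma> ^ h)"
  proof (rule sum_mono)
    fix h assume "h \<in> {..<H}"
    then have G: "\<gamma> ^ h * (\<gamma>\<^sup>2 * G h) \<le> \<gamma> ^ h * (\<gamma>\<^sup>2 * a (Suc h) - a h + c)"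
      using step \<gamma> by (simp add: mult_left_mono)
    \<comment> \<open>the surplus factor \<open>\<gamma>\<close> is what makes the sum telescope\<close>
    have "\<gamma> ^ h * \<gamma>\<^sup>2 = \<gamma> ^ Suc h * \<gamma>" by (simp add: power2_eq_square)
    also have "\<dots> \<le> \<gamma> ^ Suc h"
      using \<gamma> by (intro mult_right_le_one_le) auto
    finally have "\<gamma> ^ h * \<gamma>\<^sup>2 \<le> \<gamma> ^ Suc h" .
    then have "\<gamma> ^ h * \<gamma>\<^sup>2 * a (Suc h) \<le> \<gamma> ^ Suc h * a (Suc h)"
      using a by (intro mult_right_mono) auto
    with G show "\<gamma> ^ h * (\<gamma>\<^sup>2 * G h) \<le> \<gamma> ^ Suc h * a (Suc h) - \<gamma> ^ h * a h + c * \<gamma> ^ h"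
      by (simp add: algebra_simps)
  qed
  also have "\<dots> = \<gamma> ^ H * a H - a 0 + c * (\<Sum>h<H. \<gamma> ^ h)"
    using sum_lessThan_telescope[of "\<lambda>h. \<gamma> ^ h * a h" H]
    by (simp add: sum.distrib sum_distrib_left)
  also have "\<dots> \<le> A + c / (1 - \<gamma>)"
  proof -
    have "\<gamma> ^ H * a H \<le> 1 * A"
      using \<gamma> a by (intro mult_mono power_le_one) auto
    moreover have "c * (\<Sum>h<H. \<gamma> ^ h) \<le> c * (1 / (1 - \<gamma>))"
      using c \<gamma> by (intro mult_left_mono sum_power_le_inverse_one_minus)
    ultimately show ?thesis using a[of 0] by simp
  qed
  finally show ?thesis .
qed

lemma discounted_kernel_sum_le_add:
  assumes M: "\<And>h. row_stochastic (M h)" and \<gamma>: "0 \<le> \<gamma>" "\<gamma> < 1" and c: "0 \<le> c"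
    and uv: "\<And>y. u y \<le> v y + c"
  shows "(\<Sum>h<H. \<gamma> ^ h * kernel_mean (M h) u x)
    \<le> (\<Sum>h<H. \<gamma> ^ h * kernel_mean (M h) v x) + c / (1 - \<gamma>)"
proof -
  have "(\<Sum>h<H. \<gamma> ^ h * kernel_mean (M h) u x) \<le> (\<Sum>h<H. \<gamma> ^ h * kernel_mean (M h) v x + c * \<gamma> ^ h)"
  proof (rule sum_mono)
    fix h
    have "kernel_mean (M h) u x \<le> kernel_mean (M h) v x + c"
      by (rule kernel_mean_le_add_const[OF M uv])
    then have "\<gamma> ^ h * kernel_mean (M h) u x \<le> \<gamma> ^ h * (kernel_mean (M h) v x + c)"
      using \<gamma> by (intro mult_left_mono) auto
    then show "\<gamma> ^ h * kernel_mean (M h) u x \<le> \<gamma> ^ h * kernel_mean (M h) v x + c * \<gamma> ^ h"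
      by (simp add: algebra_simps)
  qed
  also have "\<dots> = (\<Sum>h<H. \<gamma> ^ h * kernel_mean (M h) v x) + c * (\<Sum>h<H. \<gamma> ^ h)"
    by (simp add: sum.distrib sum_distrib_left)
  also have "\<dots> \<le> (\<Sum>h<H. \<gamma> ^ h * kernel_mean (M h) v x) + c * (1 / (1 - \<gamma>))"
    using c \<gamma> by (intro add_left_mono mult_left_mono sum_power_le_inverse_one_minus)
  finally show ?thesis by simp
qed

section \<open>Variance of the value functions\<close>

lemma square_le_square_add:
  fixes a b B e :: real
  assumes "0 \<le> a" "a \<le> B" "0 \<le> b" "b \<le> B" "\<bar>a - b\<bar> \<le> e"
  shows "a * a \<le> b * b + 2 * B * e"
proof -
  have "a * a - b * b = (a - b) * (a + b)" by (simp add: algebra_simps)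
  also have "\<dots> \<le> \<bar>a - b\<bar> * (a + b)" by (rule mult_right_mono) (use assms in auto)
  also have "\<dots> \<le> e * (2 * B)" by (rule mult_mono) (use assms in auto)
  finally show ?thesis by (simp add: algebra_simps)
qed

lemma VarP_le_add:
  assumes P: "stochastic P" and u: "\<And>s. 0 \<le> u s \<and> u s \<le> B" and w: "\<And>s. 0 \<le> w s \<and> w s \<le> B"
    and uw: "\<And>s. \<bar>u s - w s\<bar> \<le> e"
  shows "VarP P u sa \<le> VarP P w sa + 4 * B * e"
proof -
  have M: "row_stochastic P" using P by (simp add: stochastic_iff_row_stochastic)
  have "kernel_mean P (\<lambda>s. u s * u s) sa \<le> kernel_mean P (\<lambda>s. w s * w s) sa + 2 * B * e"
    using u w uw by (intro kernel_mean_le_add_const[OF M] square_le_square_add) auto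
  moreover have "\<bar>kernel_mean P w sa - kernel_mean P u sa\<bar> \<le> e"
    using uw by (simp add: abs_kernel_mean_le[OF M] abs_minus_commute flip: kernel_mean_diff)
  then have "kernel_mean P w sa * kernel_mean P w sa
      \<le> kernel_mean P u sa * kernel_mean P u sa + 2 * B * e"
    using kernel_mean_bounds[OF M, of 0 u B sa] kernel_mean_bounds[OF M, of 0 w B sa] u w
    by (intro square_le_square_add) auto
  ultimately show ?thesis by (simp add: VarP_def Papply_eq_kernel_mean)
qed

lemma Max_VarP_vmax_le_add:
  assumes P: "stochastic P" and I: "finite I" "I \<noteq> {}"
    and Qb: "\<And>i sa. i \<in> I \<Longrightarrow> 0 \<le> Q i sa \<and> Q i sa \<le> B" and Qsb: "\<And>sa. 0 \<le> Qs sa \<and> Qs sa \<le> B"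
    and close: "\<And>i. i \<in> I \<Longrightarrow> supnorm (\<lambda>sa. Q i sa - Qs sa) \<le> \<epsilon>"
  shows "Max ((\<lambda>i. VarP P (vmax (Q i)) sa) ` I) \<le> VarP P (vmax Qs) sa + 4 * B * \<epsilon>"
proof -
  have "VarP P (vmax (Q i)) sa \<le> VarP P (vmax Qs) sa + 4 * B * \<epsilon>" if i: "i \<in> I" for i
  proof (rule VarP_le_add[OF P])
    show "0 \<le> vmax (Q i) s \<and> vmax (Q i) s \<le> B" for s by (rule vmax_bounds) (rule Qb[OF i])
    show "0 \<le> vmax Qs s \<and> vmax Qs s \<le> B" for s by (rule vmax_bounds) (rule Qsb)
    show "\<bar>vmax (Q i) s - vmax Qs s\<bar> \<le> \<epsilon>" for s
      using abs_vmax_diff_le[of "Q i" s Qs] close[OF i] by linarith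
  qed
  then show ?thesis using I by simp
qed

lemma VarP_optimal_value_le:
  fixes P :: "'s::finite \<times> 'a::finite \<Rightarrow> 's \<Rightarrow> real" and r :: "'s \<times> 'a \<Rightarrow> real"
    and \<gamma> :: real and \<pi> :: "'s \<Rightarrow> 'a"
  defines "Qs \<equiv> Qstar r P \<gamma>"
  assumes P: "stochastic P" and r: "\<forall>sa. 0 \<le> r sa \<and> r sa \<le> 1" and \<gamma>: "0 \<le> \<gamma>" "\<gamma> < 1"
    and near: "\<And>s. vmax Qs s - Qs (s, \<pi> s) \<le> \<delta>"
  shows "\<gamma>\<^sup>2 * VarP P (vmax Qs) sa
    \<le> \<gamma>\<^sup>2 * kernel_mean (Ppi P \<pi>) (\<lambda>x. Qs x * Qs x) sa - Qs sa * Qs sa + 2 * (1 + \<gamma>\<^sup>2 * \<delta>) / (1 - \<gamma>)"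
proof -
  define B where "B = 1 / (1 - \<gamma>)"
  have M: "row_stochastic P" using P by (simp add: stochastic_iff_row_stochastic)
  have Qs: "0 \<le> Qs x \<and> Qs x \<le> B" for x unfolding Qs_def B_def by (rule Qstar_bounds[OF P r \<gamma>])
  have Vs: "0 \<le> vmax Qs s \<and> vmax Qs s \<le> B" for s by (rule vmax_bounds) (use Qs in auto)
  have "kernel_mean P (\<lambda>s. vmax Qs s * vmax Qs s) sa
      \<le> kernel_mean (Ppi P \<pi>) (\<lambda>x. Qs x * Qs x) sa + 2 * B * \<delta>"
    unfolding kernel_mean_Ppi
  proof (rule kernel_mean_le_add_const[OF M])
    fix s
    have "\<bar>vmax Qs s - Qs (s, \<pi> s)\<bar> \<le> \<delta>" using near[of s] vmax_ge[of Qs s "\<pi> s"] by simp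
    then show "vmax Qs s * vmax Qs s \<le> Qs (s, \<pi> s) * Qs (s, \<pi> s) + 2 * B * \<delta>"
      using Vs Qs by (intro square_le_square_add) auto
  qed
  then have "\<gamma>\<^sup>2 * kernel_mean P (\<lambda>s. vmax Qs s * vmax Qs s) sa
      \<le> \<gamma>\<^sup>2 * kernel_mean (Ppi P \<pi>) (\<lambda>x. Qs x * Qs x) sa + \<gamma>\<^sup>2 * (2 * B * \<delta>)"
    by (simp add: mult_left_mono flip: distrib_left)
  moreover have "Qs sa * Qs sa - 2 * B \<le> \<gamma>\<^sup>2 * (kernel_mean P (vmax Qs) sa * kernel_mean P (vmax Qs) sa)"
  proof -
    have "\<gamma> * kernel_mean P (vmax Qs) sa = Qs sa - r sa"
      using Qstar_eq[OF P \<gamma>, of r sa] unfolding Qs_def by simp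
    then have "\<gamma>\<^sup>2 * (kernel_mean P (vmax Qs) sa * kernel_mean P (vmax Qs) sa)
        = (Qs sa - r sa) * (Qs sa - r sa)"
      by (metis power2_eq_square mult.assoc mult.left_commute)
    moreover have "r sa * Qs sa \<le> 1 * B" using r[rule_format, of sa] Qs[of sa] by (intro mult_mono) auto
    moreover have "(Qs sa - r sa) * (Qs sa - r sa) = Qs sa * Qs sa - 2 * (r sa * Qs sa) + r sa * r sa"
      by (simp add: algebra_simps)
    ultimately show ?thesis using zero_le_square[of "r sa"] by linarith
  qed
  moreover have "2 * B + \<gamma>\<^sup>2 * (2 * B * \<delta>) = 2 * (1 + \<gamma>\<^sup>2 * \<delta>) / (1 - \<gamma>)"
    by (simp add: B_def add_divide_distrib algebra_simps)
  ultimately show ?thesis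
    unfolding VarP_def Papply_eq_kernel_mean right_diff_distrib by linarith
qed

lemma discounted_VarP_optimal_value_sum_le:
  fixes P :: "'s::finite \<times> 'a::finite \<Rightarrow> 's \<Rightarrow> real" and r :: "'s \<times> 'a \<Rightarrow> real"
    and \<gamma> \<delta> :: real and pol :: "nat \<Rightarrow> 's \<Rightarrow> 'a"
  defines "Qs \<equiv> Qstar r P \<gamma>"
  assumes P: "stochastic P" and r: "\<forall>sa. 0 \<le> r sa \<and> r sa \<le> 1" and \<gamma>: "0 \<le> \<gamma>" "\<gamma> < 1"
    and \<delta>: "0 \<le> \<delta>" and near: "\<And>k s. k \<in> {1..H} \<Longrightarrow> vmax Qs s - Qs (s, pol k s) \<le> \<delta>"
  shows "\<gamma>\<^sup>2 * (\<Sum>h<H. \<gamma> ^ h * kernel_mean (prod_Ppi P pol h) (VarP P (vmax Qs)) x)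
    \<le> (3 + 2 * \<gamma>\<^sup>2 * \<delta>) / (1 - \<gamma>)\<^sup>2"
proof -
  define c where "c = 2 * (1 + \<gamma>\<^sup>2 * \<delta>) / (1 - \<gamma>)"
  define a where "a h = kernel_mean (prod_Ppi P pol h) (\<lambda>y. Qs y * Qs y) x" for h
  have M: "row_stochastic (prod_Ppi P pol h)" for h by (rule row_stochastic_prod_Ppi[OF P])
  have step: "\<gamma>\<^sup>2 * kernel_mean (prod_Ppi P pol h) (VarP P (vmax Qs)) x \<le> \<gamma>\<^sup>2 * a (Suc h) - a h + c"
    if "h < H" for h
  proof -
    have "kernel_mean (prod_Ppi P pol h) (\<lambda>y. \<gamma>\<^sup>2 * VarP P (vmax Qs) y) x
      \<le> kernel_mean (prod_Ppi P pol h)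
          (\<lambda>y. \<gamma>\<^sup>2 * kernel_mean (Ppi P (pol (Suc h))) (\<lambda>y. Qs y * Qs y) y - Qs y * Qs y) x + c"
    proof (rule kernel_mean_le_add_const[OF M])
      have "vmax Qs s - Qs (s, pol (Suc h) s) \<le> \<delta>" for s using near that by simp
      from VarP_optimal_value_le[OF P r \<gamma> this[unfolded Qs_def]]
      show "\<gamma>\<^sup>2 * VarP P (vmax Qs) y
        \<le> \<gamma>\<^sup>2 * kernel_mean (Ppi P (pol (Suc h))) (\<lambda>y. Qs y * Qs y) y - Qs y * Qs y + c" for y
        by (simp add: Qs_def c_def)
    qed
    then show ?thesis
      by (simp add: a_def kernel_mean_cmult kernel_mean_diff kernel_mean_mat_mult)
  qed
  have a: "0 \<le> a h \<and> a h \<le> (1 / (1 - \<gamma>))\<^sup>2" for h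
    unfolding a_def
  proof (rule kernel_mean_bounds[OF M])
    fix y
    have "0 \<le> Qs y" "Qs y \<le> 1 / (1 - \<gamma>)" unfolding Qs_def using Qstar_bounds[OF P r \<gamma>] by auto
    then show "0 \<le> Qs y * Qs y \<and> Qs y * Qs y \<le> (1 / (1 - \<gamma>))\<^sup>2"
      using mult_mono[of "Qs y" "1 / (1 - \<gamma>)" "Qs y" "1 / (1 - \<gamma>)"] \<gamma> by (simp add: power2_eq_square)
  qed
  have "0 \<le> c" using \<gamma> \<delta> by (simp add: c_def)
  then have "\<gamma>\<^sup>2 * (\<Sum>h<H. \<gamma> ^ h * kernel_mean (prod_Ppi P pol h) (VarP P (vmax Qs)) x)
      \<le> (1 / (1 - \<gamma>))\<^sup>2 + c / (1 - \<gamma>)"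
    by (rule discounted_telescoping_le[where G = "\<lambda>h. kernel_mean (prod_Ppi P pol h) (VarP P (vmax Qs)) x",
          OF \<gamma> _ step a])
  also have "\<dots> = (1 + 2 * (1 + \<gamma>\<^sup>2 * \<delta>)) / (1 - \<gamma>)\<^sup>2"
    by (simp add: c_def power2_eq_square add_divide_distrib)
  also have "\<dots> = (3 + 2 * \<gamma>\<^sup>2 * \<delta>) / (1 - \<gamma>)\<^sup>2"
    by (simp add: algebra_simps)
  finally show ?thesis .
qed

lemma discounted_VarP_proxy_sum_le:
  fixes P :: "'s::finite \<times> 'a::finite \<Rightarrow> 's \<Rightarrow> real" and r :: "'s \<times> 'a \<Rightarrow> real"
    and \<gamma> \<epsilon> :: real and pol :: "nat \<Rightarrow> 's \<Rightarrow> 'a" and W :: "'s \<times> 'a \<Rightarrow> real"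
  defines "Qs \<equiv> Qstar r P \<gamma>"
  assumes P: "stochastic P" and r: "\<forall>sa. 0 \<le> r sa \<and> r sa \<le> 1" and \<gamma>: "0 < \<gamma>" "\<gamma> < 1"
    and \<epsilon>: "0 \<le> \<epsilon>" and near: "\<And>k s. k \<in> {1..H} \<Longrightarrow> vmax Qs s - Qs (s, pol k s) \<le> 2 * \<epsilon>"
    and W: "\<And>y. W y \<le> VarP P (vmax Qs) y + 4 * (1 / (1 - \<gamma>)) * \<epsilon>"
  shows "(\<Sum>h<H. \<gamma> ^ h * kernel_mean (prod_Ppi P pol h) W x) \<le> 4 / (\<gamma>\<^sup>2 * (1 - \<gamma>)\<^sup>2) * (1 + 2 * \<epsilon>)"
proof -
  let ?S = "\<lambda>v. \<Sum>h<H. \<gamma> ^ h * kernel_mean (prod_Ppi P pol h) v x"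
  have \<gamma>0: "0 \<le> \<gamma>" using \<gamma> by simp
  have "?S W \<le> ?S (VarP P (vmax Qs)) + 4 * (1 / (1 - \<gamma>)) * \<epsilon> / (1 - \<gamma>)"
    using \<epsilon> \<gamma> by (intro discounted_kernel_sum_le_add[OF row_stochastic_prod_Ppi[OF P] \<gamma>0 \<gamma>(2) _ W]) simp
  then have "\<gamma>\<^sup>2 * ?S W \<le> \<gamma>\<^sup>2 * (?S (VarP P (vmax Qs)) + 4 * \<epsilon> / (1 - \<gamma>)\<^sup>2)"
    by (intro mult_left_mono) (simp_all add: power2_eq_square)
  also have "\<dots> = \<gamma>\<^sup>2 * ?S (VarP P (vmax Qs)) + \<gamma>\<^sup>2 * (4 * \<epsilon>) / (1 - \<gamma>)\<^sup>2"
    by (simp add: distrib_left)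
  also have "\<dots> \<le> (3 + 2 * \<gamma>\<^sup>2 * (2 * \<epsilon>)) / (1 - \<gamma>)\<^sup>2 + \<gamma>\<^sup>2 * (4 * \<epsilon>) / (1 - \<gamma>)\<^sup>2"
    using near \<epsilon> unfolding Qs_def
    by (intro add_right_mono discounted_VarP_optimal_value_sum_le[OF P r \<gamma>0 \<gamma>(2)]) auto
  also have "\<dots> = (3 + 4 * \<gamma>\<^sup>2 * \<epsilon> + \<gamma>\<^sup>2 * (4 * \<epsilon>)) / (1 - \<gamma>)\<^sup>2"
    by (simp add: add_divide_distrib)
  also have "\<dots> \<le> 4 * (1 + 2 * \<epsilon>) / (1 - \<gamma>)\<^sup>2"
  proof (rule divide_right_mono)
    have "\<gamma>\<^sup>2 * (8 * \<epsilon>) \<le> 8 * \<epsilon>"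
      using \<gamma> \<epsilon> by (intro mult_left_le_one_le) (auto simp: power_le_one)
    then show "3 + 4 * \<gamma>\<^sup>2 * \<epsilon> + \<gamma>\<^sup>2 * (4 * \<epsilon>) \<le> 4 * (1 + 2 * \<epsilon>)"
      by (simp add: algebra_simps)
  qed simp
  finally show ?thesis
    using \<gamma> by (simp add: pos_le_divide_eq mult.commute mult.left_commute)
qed

theorem mainTheorem10:
  fixes P :: "'s::finite \<times> 'a::finite \<Rightarrow> 's \<Rightarrow> real"
    and r :: "'s \<times> 'a \<Rightarrow> real"
    and \<gamma> :: real and t H :: nat
    and Q :: "nat \<Rightarrow> ('s \<times> 'a \<Rightarrow> real)"
    and \<pi> :: "nat \<Rightarrow> 's \<Rightarrow> 'a"
    and pol :: "nat \<Rightarrow> 's \<Rightarrow> 'a"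
  defines "I \<equiv> {i::nat. real t / 2 \<le> real i \<and> i < t}"
  assumes P: "stochastic P"
    and r: "\<forall>sa. 0 \<le> r sa \<and> r sa \<le> 1"
    and \<gamma>: "0 < \<gamma>" "\<gamma> < 1"
    and t: "1 \<le> t" and H: "1 \<le> H"
    and Qb: "\<forall>i\<in>I. \<forall>sa. 0 \<le> Q i sa \<and> Q i sa \<le> 1 / (1 - \<gamma>)"
    and greedy: "\<forall>i\<in>I. \<forall>s. \<forall>a. Q i (s, a) \<le> Q i (s, \<pi> i s)"
    and pol: "\<forall>k\<in>{1..H}. \<forall>s. pol k s \<in> {\<pi> i s | i. i \<in> I}"
  shows "\<forall>x. (\<Sum>h<H. \<gamma> ^ h *
             mat_vec (prod_Ppi P pol h) (\<lambda>y. Max ((\<lambda>i. VarP P (vmax (Q i)) y) ` I)) x)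
         \<le> 4 / (\<gamma>\<^sup>2 * (1 - \<gamma>)\<^sup>2) *
             (1 + 2 * Max ((\<lambda>i. supnorm (\<lambda>sa. Q i sa - Qstar r P \<gamma> sa)) ` I))"
proof -
  define Qs where "Qs = Qstar r P \<gamma>"
  define \<epsilon> where "\<epsilon> = Max ((\<lambda>i. supnorm (\<lambda>sa. Q i sa - Qs sa)) ` I)"
  have I: "finite I" "I \<noteq> {}"
    using pol H by (auto simp: I_def intro: finite_subset[of _ "{..<t}"]) fastforce
  have close: "supnorm (\<lambda>sa. Q i sa - Qs sa) \<le> \<epsilon>" if "i \<in> I" for i
    unfolding \<epsilon>_def using I that by simp
  obtain i0 where "i0 \<in> I" using I(2) by blast
  then have \<epsilon>0: "0 \<le> \<epsilon>"
    using close supnorm_nonneg[of "\<lambda>sa. Q i0 sa - Qs sa"] by fastforce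
  have near: "vmax Qs s - Qs (s, pol k s) \<le> 2 * \<epsilon>" if "k \<in> {1..H}" for k s
  proof -
    from pol that have "pol k s \<in> {\<pi> i s | i. i \<in> I}" by simp
    then obtain i where i: "i \<in> I" "pol k s = \<pi> i s" by auto
    show ?thesis
      using greedy_near_optimal[OF close[OF i(1)], of s "\<pi> i s"] greedy i by simp
  qed
  have Qsb: "0 \<le> Qs sa \<and> Qs sa \<le> 1 / (1 - \<gamma>)" for sa
    unfolding Qs_def using \<gamma> by (intro Qstar_bounds[OF P r]) auto
  have "Max ((\<lambda>i. VarP P (vmax (Q i)) y) ` I) \<le> VarP P (vmax Qs) y + 4 * (1 / (1 - \<gamma>)) * \<epsilon>" for y
    by (rule Max_VarP_vmax_le_add[OF P I _ Qsb close]) (use Qb in blast)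
  from discounted_VarP_proxy_sum_le[OF P r \<gamma> \<epsilon>0 near[unfolded Qs_def] this[unfolded Qs_def]]
  show ?thesis unfolding mat_vec_eq_kernel_mean \<epsilon>_def[unfolded Qs_def] ..
qed

end
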